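(* For all positive integers $i,j$ and nonnegative integers $k$ such that $(i-k-2)(j-k-2)\geq (k+1)^2$, we have $R_k^{\mathcal{SP}}(i,j)=i+j-1$, where $\mathcal{SP}$ is the class of split graphs.
   Context: All graphs are finite and simple. For a graph $G$ and a nonnegative integer $k$, a $k$-sparse $j$-set is a set of $j$ vertices of $G$ inducing a subgraph of maximum degree at most $k$; a $k$-dense $i$-set is a set of $i$ vertices of $G$ that is $k$-sparse in the complement of $G$. For a graph class $\mathcal{G}$, $R_k^{\mathcal{G}}(i,j)$ is the smallest natural number $n$ such that every graph on $n$ vertices in $\mathcal{G}$ has either a $k$-dense $i$-set or a $k$-sparse $j$-set. A split graph is a graph whose vertex set can be partitioned into a clique and an independent set. *)

theory Defs
  imports Main
begin

text \<open>A finite simple graph with vertex set V and adjacency relation E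
  (only the values of E on V matter).\<close>
definition simple_graph :: "'a set \<Rightarrow> ('a \<Rightarrow> 'a \<Rightarrow> bool) \<Rightarrow> bool" where
  "simple_graph V E \<longleftrightarrow> finite V \<and> (\<forall>u\<in>V. \<forall>v\<in>V. E u v \<longleftrightarrow> E v u) \<and> (\<forall>v\<in>V. \<not> E v v)"

definition compl_adj :: "('a \<Rightarrow> 'a \<Rightarrow> bool) \<Rightarrow> 'a \<Rightarrow> 'a \<Rightarrow> bool" where
  "compl_adj E u v \<longleftrightarrow> u \<noteq> v \<and> \<not> E u v"

definition k_sparse_set :: "'a set \<Rightarrow> ('a \<Rightarrow> 'a \<Rightarrow> bool) \<Rightarrow> nat \<Rightarrow> nat \<Rightarrow> 'a set \<Rightarrow> bool" where
  "k_sparse_set V E k j S \<longleftrightarrow> S \<subseteq> V \<and> card S = j \<and> (\<forall>v\<in>S. card {u\<in>S. E v u} \<le> k)"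

definition k_dense_set :: "'a set \<Rightarrow> ('a \<Rightarrow> 'a \<Rightarrow> bool) \<Rightarrow> nat \<Rightarrow> nat \<Rightarrow> 'a set \<Rightarrow> bool" where
  "k_dense_set V E k i S \<longleftrightarrow> k_sparse_set V (compl_adj E) k i S"

definition split_graph :: "'a set \<Rightarrow> ('a \<Rightarrow> 'a \<Rightarrow> bool) \<Rightarrow> bool" where
  "split_graph V E \<longleftrightarrow> (\<exists>C I. C \<union> I = V \<and> C \<inter> I = {} \<and>
      (\<forall>u\<in>C. \<forall>v\<in>C. u \<noteq> v \<longrightarrow> E u v) \<and> (\<forall>u\<in>I. \<forall>v\<in>I. \<not> E u v))"

definition ramsey_k :: "(nat set \<Rightarrow> (nat \<Rightarrow> nat \<Rightarrow> bool) \<Rightarrow> bool) \<Rightarrow> nat \<Rightarrow> nat \<Rightarrow> nat \<Rightarrow> nat" where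
  "ramsey_k cls k i j = (LEAST n. \<forall>E. simple_graph {0..<n} E \<and> cls {0..<n} E \<longrightarrow>
      (\<exists>S. k_dense_set {0..<n} E k i S) \<or> (\<exists>S. k_sparse_set {0..<n} E k j S))"

end

theory Submission
  imports Defs
begin

text \<open>A split graph on \<open>i + j - 1\<close> vertices has a clique of size \<open>i\<close> or an independent
  set of size \<open>j\<close>, which are \<open>0\<close>-dense resp. \<open>0\<close>-sparse. For the lower bound take a clique
  of \<open>m = i - 1\<close> vertices and an independent set of \<open>l = j - 1\<close> vertices, and join the
  clique vertex \<open>u\<close> to the window of \<open>k + 1\<close> consecutive residues mod \<open>l\<close> starting at
  \<open>u (k + 1)\<close>. Every clique vertex gets exactly \<open>k + 1\<close> independent neighbours, and since
  the windows of the clique vertices tile \<open>[0, m (k + 1))\<close>, every independent vertex has at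
  most \<open>\<lceil>m (k + 1) / l\<rceil> \<le> m - k - 1\<close> clique neighbours; apart from the trivial case
  \<open>i = j = 1\<close>, the last inequality is the hypothesis \<open>(i - k - 2) (j - k - 2) \<ge> (k + 1)\<^sup>2\<close>.
  Hence an \<open>i\<close>-set, which contains an independent vertex, is not \<open>k\<close>-dense, and a \<open>j\<close>-set,
  which contains a clique vertex, is not \<open>k\<close>-sparse.\<close>

lemma ramsey_k_eqI:
  assumes "\<And>E. simple_graph {0..<N} E \<Longrightarrow> cls {0..<N} E \<Longrightarrow>
      (\<exists>S. k_dense_set {0..<N} E k i S) \<or> (\<exists>S. k_sparse_set {0..<N} E k j S)"
    and "\<And>n. n < N \<Longrightarrow> \<exists>E. simple_graph {0..<n} E \<and> cls {0..<n} E \<and>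
      (\<forall>S. \<not> k_dense_set {0..<n} E k i S) \<and> (\<forall>S. \<not> k_sparse_set {0..<n} E k j S)"
  shows "ramsey_k cls k i j = N"
  unfolding ramsey_k_def
proof (rule Least_equality)
  show "\<forall>E. simple_graph {0..<N} E \<and> cls {0..<N} E \<longrightarrow>
      (\<exists>S. k_dense_set {0..<N} E k i S) \<or> (\<exists>S. k_sparse_set {0..<N} E k j S)"
    using assms(1) by blast
next
  fix n
  assume "\<forall>E. simple_graph {0..<n} E \<and> cls {0..<n} E \<longrightarrow>
      (\<exists>S. k_dense_set {0..<n} E k i S) \<or> (\<exists>S. k_sparse_set {0..<n} E k j S)"
  then show "N \<le> n"
    using assms(2) by (meson not_le)
qed

lemma k_dense_set_of_clique:
  assumes "S \<subseteq> V" and "\<forall>u\<in>S. \<forall>v\<in>S. u \<noteq> v \<longrightarrow> E u v"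
  shows "k_dense_set V E k (card S) S"
proof -
  have "card {u\<in>S. compl_adj E v u} = 0" if "v \<in> S" for v
    using assms(2) that by (auto simp: compl_adj_def card_eq_0_iff)
  then show ?thesis
    using assms(1) by (auto simp: k_dense_set_def k_sparse_set_def)
qed

lemma k_sparse_set_of_independent:
  assumes "S \<subseteq> V" and "\<forall>u\<in>S. \<forall>v\<in>S. \<not> E u v"
  shows "k_sparse_set V E k (card S) S"
proof -
  have "card {u\<in>S. E v u} = 0" if "v \<in> S" for v
    using assms(2) that by (auto simp: card_eq_0_iff)
  then show ?thesis
    using assms(1) by (auto simp: k_sparse_set_def)
qed

lemma split_graph_dense_or_sparse:
  assumes "split_graph V E" and "finite V" and "i + j \<le> card V + 1"
  shows "(\<exists>S. k_dense_set V E k i S) \<or> (\<exists>S. k_sparse_set V E k j S)"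
proof -
  obtain C I where CI: "C \<union> I = V" "C \<inter> I = {}"
    and clique: "\<forall>u\<in>C. \<forall>v\<in>C. u \<noteq> v \<longrightarrow> E u v" and indep: "\<forall>u\<in>I. \<forall>v\<in>I. \<not> E u v"
    using assms(1) unfolding split_graph_def by blast
  have "card C + card I = card V"
    using CI assms(2) by (metis card_Un_disjoint finite_Un)
  then consider "i \<le> card C" | "j \<le> card I"
    using assms(3) by linarith
  then show ?thesis
  proof cases
    case 1
    then obtain S where "S \<subseteq> C" "card S = i"
      by (rule obtain_subset_with_card_n)
    then have "k_dense_set V E k i S"
      using k_dense_set_of_clique[of S V E k] CI(1) clique by blast
    then show ?thesis by blast
  next
    case 2
    then obtain S where "S \<subseteq> I" "card S = j"
      by (rule obtain_subset_with_card_n)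
    then have "k_sparse_set V E k j S"
      using k_sparse_set_of_independent[of S V E k] CI(1) indep by blast
    then show ?thesis by blast
  qed
qed

definition cyclic_window :: "nat \<Rightarrow> nat \<Rightarrow> nat \<Rightarrow> nat \<Rightarrow> bool" where
  "cyclic_window k l u w \<longleftrightarrow> (\<exists>r<k+1. (u * (k+1) + r) mod l = w)"

lemma mod_add_left_cancel_less:
  fixes a x y l :: nat
  assumes "(a + x) mod l = (a + y) mod l" and "x < l" and "y < l"
  shows "x = y"
proof -
  have "x = y" if eq: "(a + x) mod l = (a + y) mod l" and "x \<le> y" and "y < l" for x y
  proof -
    obtain s where "a + y = a + x + l * s"
      using mod_eq_nat1E[of "a + y" l "a + x"] eq \<open>x \<le> y\<close> by auto
    then have "y = x + l * s"
      by simp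
    moreover from this \<open>y < l\<close> have "s = 0"
      by (cases s) auto
    ultimately show ?thesis
      by simp
  qed
  then show ?thesis
    using assms by (metis nat_le_linear)
qed

lemma card_cyclic_window:
  assumes "k + 1 \<le> l"
  shows "card {w. w < l \<and> cyclic_window k l u w} = k + 1"
proof -
  have "inj_on (\<lambda>r. (u * (k+1) + r) mod l) {..<k+1}"
  proof (rule inj_onI)
    fix x y
    assume "x \<in> {..<k+1}" "y \<in> {..<k+1}" "(u * (k+1) + x) mod l = (u * (k+1) + y) mod l"
    then show "x = y"
      using assms by (intro mod_add_left_cancel_less[of "u * (k+1)" x l y]) auto
  qed
  moreover have "{w. w < l \<and> cyclic_window k l u w} = (\<lambda>r. (u * (k+1) + r) mod l) ` {..<k+1}"
    using assms by (auto simp: cyclic_window_def)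
  ultimately show ?thesis
    by (simp add: card_image)
qed

lemma card_residue_class_le:
  fixes l c w :: nat
  shows "card {x. x < l * c \<and> x mod l = w} \<le> c"
proof -
  have "inj_on (\<lambda>x. x div l) {x. x < l * c \<and> x mod l = w}"
  proof (rule inj_onI)
    fix x y
    assume "x \<in> {x. x < l * c \<and> x mod l = w}" "y \<in> {x. x < l * c \<and> x mod l = w}"
      and "x div l = y div l"
    then show "x = y"
      using div_mult_mod_eq[of x l] div_mult_mod_eq[of y l] by simp
  qed
  moreover have "(\<lambda>x. x div l) ` {x. x < l * c \<and> x mod l = w} \<subseteq> {..<c}"
    using less_mult_imp_div_less by (auto simp: mult.commute)
  ultimately show ?thesis
    using card_inj_on_le[of "\<lambda>x. x div l" _ "{..<c}"] by simp
qed

lemma card_cyclic_window_preimage_le: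
  assumes "m * (k+1) \<le> l * c"
  shows "card {u. u < m \<and> cyclic_window k l u w} \<le> c"
proof -
  have "{u. u < m \<and> cyclic_window k l u w}
      \<subseteq> (\<lambda>x. x div (k+1)) ` {x. x < l * c \<and> x mod l = w}"
  proof
    fix u
    assume "u \<in> {u. u < m \<and> cyclic_window k l u w}"
    then obtain r where r: "r < k + 1" "(u * (k+1) + r) mod l = w" and "u < m"
      unfolding cyclic_window_def by blast
    have "(u + 1) * (k+1) \<le> m * (k+1)"
      using \<open>u < m\<close> by (intro mult_right_mono) auto
    then have "u * (k+1) + r < m * (k+1)"
      using r(1) by simp
    moreover have "(u * (k+1) + r) div (k+1) = u"
      using r(1) div_mult_self1[of "k+1" r u] by (simp add: add.commute)
    ultimately show "u \<in> (\<lambda>x. x div (k+1)) ` {x. x < l * c \<and> x mod l = w}"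
      using r(2) assms by (intro image_eqI[of _ _ "u * (k+1) + r"]) auto
  qed
  then have "card {u. u < m \<and> cyclic_window k l u w}
      \<le> card ((\<lambda>x. x div (k+1)) ` {x. x < l * c \<and> x mod l = w})"
    by (intro card_mono) auto
  also have "\<dots> \<le> card {x. x < l * c \<and> x mod l = w}"
    by (rule card_image_le) simp
  also have "\<dots> \<le> c"
    by (rule card_residue_class_le)
  finally show ?thesis .
qed

text \<open>Vertices \<open>{..<m}\<close> form the clique, vertex \<open>m + w\<close> with \<open>w < l\<close> is the \<open>w\<close>-th
  independent vertex.\<close>
definition cyclic_split_graph :: "nat \<Rightarrow> nat \<Rightarrow> nat \<Rightarrow> nat \<Rightarrow> nat \<Rightarrow> bool" where
  "cyclic_split_graph k m l a b \<longleftrightarrow>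
     (a < m \<and> b < m \<and> a \<noteq> b)
   \<or> (a < m \<and> m \<le> b \<and> cyclic_window k l a (b - m))
   \<or> (b < m \<and> m \<le> a \<and> cyclic_window k l b (a - m))"

lemma simple_graph_cyclic_split_graph:
  "finite V \<Longrightarrow> simple_graph V (cyclic_split_graph k m l)"
  by (auto simp: simple_graph_def cyclic_split_graph_def)

lemma split_graph_cyclic_split_graph: "split_graph V (cyclic_split_graph k m l)"
  unfolding split_graph_def
  by (rule exI[of _ "{v\<in>V. v < m}"], rule exI[of _ "{v\<in>V. m \<le> v}"])
    (auto simp: cyclic_split_graph_def)

lemma card_le_Suc_neighbours_non_neighbours:
  assumes "finite S" and "v \<in> S"
  shows "card S \<le> Suc (card {u\<in>S. E v u} + card {u\<in>S. compl_adj E v u})"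
proof -
  have "S \<subseteq> insert v ({u\<in>S. E v u} \<union> {u\<in>S. compl_adj E v u})"
    by (auto simp: compl_adj_def)
  then have "card S \<le> card (insert v ({u\<in>S. E v u} \<union> {u\<in>S. compl_adj E v u}))"
    using assms(1) by (intro card_mono) auto
  also have "\<dots> \<le> Suc (card ({u\<in>S. E v u} \<union> {u\<in>S. compl_adj E v u}))"
    using assms(1) by (simp add: card_insert_if)
  also have "\<dots> \<le> Suc (card {u\<in>S. E v u} + card {u\<in>S. compl_adj E v u})"
    using card_Un_le by simp
  finally show ?thesis .
qed

lemma cyclic_split_graph_no_dense_set:
  assumes "k + 1 \<le> m" and "m * (k+1) \<le> l * (m - k - 1)" and "V \<subseteq> {0..<m+l}"
  shows "\<not> k_dense_set V (cyclic_split_graph k m l) k (m + 1) S"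
proof
  let ?E = "cyclic_split_graph k m l"
  assume "k_dense_set V ?E k (m + 1) S"
  then have S: "S \<subseteq> {0..<m+l}" "card S = m + 1" and sparse: "\<forall>v\<in>S. card {u\<in>S. compl_adj ?E v u} \<le> k"
    using assms(3) by (auto simp: k_dense_set_def k_sparse_set_def)
  have "\<not> S \<subseteq> {..<m}"
    using S(2) card_mono[of "{..<m}" S] by auto
  then obtain v where v: "v \<in> S" "m \<le> v"
    by (meson lessThan_iff not_le subsetI)
  have "{u\<in>S. ?E v u} \<subseteq> {u. u < m \<and> cyclic_window k l u (v - m)}"
    using v(2) by (auto simp: cyclic_split_graph_def)
  then have "card {u\<in>S. ?E v u} \<le> card {u. u < m \<and> cyclic_window k l u (v - m)}"
    by (intro card_mono) auto
  also have "\<dots> \<le> m - k - 1"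
    by (rule card_cyclic_window_preimage_le[OF assms(2)])
  finally have "card {u\<in>S. ?E v u} \<le> m - k - 1" .
  moreover have "finite S"
    using S(1) finite_subset by blast
  ultimately have "k < card {u\<in>S. compl_adj ?E v u}"
    using card_le_Suc_neighbours_non_neighbours[of S v ?E] v(1) S(2) assms(1) by linarith
  then show False
    using sparse v(1) by auto
qed

lemma cyclic_split_graph_no_sparse_set:
  assumes "k + 1 \<le> l" and "V \<subseteq> {0..<m+l}"
  shows "\<not> k_sparse_set V (cyclic_split_graph k m l) k (l + 1) S"
proof
  let ?E = "cyclic_split_graph k m l"
  assume "k_sparse_set V ?E k (l + 1) S"
  then have S: "S \<subseteq> {0..<m+l}" "card S = l + 1" and sparse: "\<forall>v\<in>S. card {u\<in>S. ?E v u} \<le> k"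
    using assms(2) by (auto simp: k_sparse_set_def)
  have "\<not> S \<subseteq> {m..<m+l}"
    using S(2) card_mono[of "{m..<m+l}" S] by auto
  then obtain v where v: "v \<in> S" "v < m"
    using S(1) by (force simp: not_less)
  let ?W = "{w. w < l \<and> cyclic_window k l v w}"
  have "{u\<in>S. compl_adj ?E v u} \<subseteq> (\<lambda>w. m + w) ` ({..<l} - ?W)"
  proof
    fix u
    assume u: "u \<in> {u\<in>S. compl_adj ?E v u}"
    then have "m \<le> u" "u < m + l" "\<not> cyclic_window k l v (u - m)"
      using v(2) S(1) by (auto simp: compl_adj_def cyclic_split_graph_def)
    then show "u \<in> (\<lambda>w. m + w) ` ({..<l} - ?W)"
      by (intro image_eqI[of _ _ "u - m"]) auto
  qed
  then have "card {u\<in>S. compl_adj ?E v u} \<le> card ((\<lambda>w. m + w) ` ({..<l} - ?W))"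
    by (intro card_mono) auto
  also have "\<dots> \<le> card ({..<l} - ?W)"
    by (rule card_image_le) simp
  also have "\<dots> = l - (k + 1)"
    using card_cyclic_window[OF assms(1)] by (subst card_Diff_subset) auto
  finally have "card {u\<in>S. compl_adj ?E v u} \<le> l - (k + 1)" .
  moreover have "finite S"
    using S(1) finite_subset by blast
  ultimately have "k < card {u\<in>S. ?E v u}"
    using card_le_Suc_neighbours_non_neighbours[of S v ?E] v(1) S(2) assms(1) by linarith
  then show False
    using sparse v(1) by auto
qed

lemma cyclic_split_graph_no_dense_nor_sparse_set:
  assumes "m = 0 \<and> l = 0 \<or> k + 1 \<le> m \<and> k + 1 \<le> l \<and> m * (k + 1) \<le> l * (m - k - 1)"
    and "V \<subseteq> {0..<m+l}"
  shows "\<not> k_dense_set V (cyclic_split_graph k m l) k (m + 1) S"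
    and "\<not> k_sparse_set V (cyclic_split_graph k m l) k (l + 1) S"
proof -
  consider "V = {}" | "k + 1 \<le> m" "k + 1 \<le> l" "m * (k + 1) \<le> l * (m - k - 1)"
    using assms by auto
  note parameter_cases = this
  show "\<not> k_dense_set V (cyclic_split_graph k m l) k (m + 1) S"
    using parameter_cases
  proof cases
    case 1
    then show ?thesis
      by (auto simp: k_dense_set_def k_sparse_set_def)
  next
    case 2
    show ?thesis
      by (rule cyclic_split_graph_no_dense_set[OF 2(1) 2(3) assms(2)])
  qed
  show "\<not> k_sparse_set V (cyclic_split_graph k m l) k (l + 1) S"
    using parameter_cases
  proof cases
    case 1
    then show ?thesis
      by (auto simp: k_sparse_set_def)
  next
    case 2
    show ?thesis
      by (rule cyclic_split_graph_no_sparse_set[OF 2(2) assms(2)])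
  qed
qed

lemma square_le_mult_imp_eq:
  fixes x y c :: "'a::linordered_idom"
  assumes "c\<^sup>2 \<le> x * y" and "0 \<le> x" and "0 \<le> y" and "x \<le> c" and "y \<le> c" and "0 < c"
  shows "x = c \<and> y = c"
proof -
  have "x * y \<le> x * c"
    using assms(2,5) by (rule mult_left_mono[rotated])
  moreover have "x * c \<le> c * c"
    using assms(4,6) by (simp add: mult_right_mono)
  moreover have "c * c \<le> x * y"
    using assms(1) by (simp add: power2_eq_square)
  ultimately have "x * c = c * c" and "x * y = x * c"
    by (meson order.antisym order.trans)+
  then have "x = c"
    using assms(6) by simp
  moreover from this \<open>x * y = x * c\<close> have "y = c"
    using assms(6) by simp
  ultimately show ?thesis ..
qed

lemma parameter_condition_cases:
  fixes m l k :: nat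
  assumes "(int m - int k - 1) * (int l - int k - 1) \<ge> (int k + 1) ^ 2"
  shows "m = 0 \<and> l = 0 \<or> k + 1 \<le> m \<and> k + 1 \<le> l \<and> m * (k + 1) \<le> l * (m - k - 1)"
proof -
  define a b where "a = int m - int k - 1" and "b = int l - int k - 1"
  have sq: "(int k + 1)\<^sup>2 \<le> a * b"
    using assms by (simp add: a_def b_def)
  moreover have "0 < (int k + 1)\<^sup>2"
    by simp
  ultimately have "0 < a * b"
    by linarith
  then consider "0 < a" "0 < b" | "a < 0" "b < 0"
    by (auto simp: zero_less_mult_iff)
  then show ?thesis
  proof cases
    case 1
    then have "k + 1 \<le> m" "k + 1 \<le> l"
      by (auto simp: a_def b_def)
    moreover have "int m = a + int k + 1" "int l = b + int k + 1" "int (m - k - 1) = a"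
      using 1 by (auto simp: a_def b_def)
    moreover have "(a + int k + 1) * (int k + 1) \<le> (b + int k + 1) * a"
      using sq by (simp add: algebra_simps power2_eq_square)
    ultimately show ?thesis
      by (metis of_nat_le_iff of_nat_mult of_nat_Suc add.commute Suc_eq_plus1)
  next
    case 2
    have "(int k + 1)\<^sup>2 \<le> (- a) * (- b)"
      using sq by simp
    then have "- a = int k + 1 \<and> - b = int k + 1"
      by (rule square_le_mult_imp_eq) (use 2 in \<open>auto simp: a_def b_def\<close>)
    then show ?thesis
      by (simp add: a_def b_def)
  qed
qed

theorem theorem6p2:
  fixes i j k :: nat
  assumes "0 < i" and "0 < j"
    and "(int i - int k - 2) * (int j - int k - 2) \<ge> (int k + 1) ^ 2"
  shows "ramsey_k split_graph k i j = i + j - 1"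
proof (rule ramsey_k_eqI)
  fix E
  assume "split_graph {0..<i + j - 1} E"
  then show "(\<exists>S. k_dense_set {0..<i + j - 1} E k i S) \<or> (\<exists>S. k_sparse_set {0..<i + j - 1} E k j S)"
    using split_graph_dense_or_sparse[of "{0..<i + j - 1}" E] assms(1,2) by simp
next
  fix n
  assume "n < i + j - 1"
  obtain m l where i: "i = m + 1" and j: "j = l + 1"
    using assms(1,2) by (metis Suc_eq_plus1 gr0_implies_Suc)
  have "(int m - int k - 1) * (int l - int k - 1) \<ge> (int k + 1) ^ 2"
    using assms(3) by (simp add: i j algebra_simps)
  then have "m = 0 \<and> l = 0 \<or> k + 1 \<le> m \<and> k + 1 \<le> l \<and> m * (k + 1) \<le> l * (m - k - 1)"
    by (rule parameter_condition_cases)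
  moreover have "{0..<n} \<subseteq> {0..<m + l}"
    using \<open>n < i + j - 1\<close> by (auto simp: i j)
  ultimately have "\<not> k_dense_set {0..<n} (cyclic_split_graph k m l) k i S"
    and "\<not> k_sparse_set {0..<n} (cyclic_split_graph k m l) k j S" for S
    unfolding i j by (rule cyclic_split_graph_no_dense_nor_sparse_set)+
  then show "\<exists>E. simple_graph {0..<n} E \<and> split_graph {0..<n} E \<and>
      (\<forall>S. \<not> k_dense_set {0..<n} E k i S) \<and> (\<forall>S. \<not> k_sparse_set {0..<n} E k j S)"
    using simple_graph_cyclic_split_graph split_graph_cyclic_split_graph by blast
qed

end
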